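(* Let $\kappa$ be an uncountable regular cardinal, let $\mathcal{I}$ be a $\kappa$-complete proper ideal on $\kappa$ containing every bounded subset of $\kappa$, and let $\nu\in\{2,\kappa\}$. Then the class of basic $\mathcal{I}$-Borel subsets of ${}^{\kappa}\nu$ coincides with the class of $\kappa$-Borel subsets of ${}^{\kappa}\nu$. In particular, the class of basic $\mathcal{I}$-Borel sets does not depend on $\mathcal{I}$.
   Context: ${}^{\kappa}\nu$ is the set of functions $\kappa\to\nu$. For a function $f$ with domain contained in $\kappa$ and values in $\nu$, $\mathbf{N}_f=\{x\in{}^{\kappa}\nu: f\subseteq x\}$. A basic $\kappa$-open set is a set $\mathbf{N}_f$ with $f\colon X\to\nu$, $X\subseteq\kappa$, $|X|<\kappa$; the $\kappa$-Borel sets form the smallest class containing the basic $\kappa$-open sets and closed under complements and unions of at most $\kappa$ sets. A basic $\mathcal{I}$-open set is $\mathbf{N}_f$ with $f\colon D\to\nu$, $D\in\mathcal{I}$; the basic $\mathcal{I}$-Borel sets form the smallest class containing the basic $\mathcal{I}$-open sets and closed under complements and unions of at most $\kappa$ sets. *)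

theory Defs
  imports Main "HOL-Library.Countable_Set"
begin

unbundle cardinal_syntax

text \<open>The cardinal kappa is represented by a type 'k carrying a cardinal well-order r
  with Field r = UNIV; thus kappa = UNIV :: 'k set and the ordinals below kappa are
  the elements of 'k ordered by r.  Functions kappa -> nu are functions 'k => 'v.\<close>

definition nbhd :: "'k set \<Rightarrow> ('k \<Rightarrow> 'v) \<Rightarrow> ('k \<Rightarrow> 'v) set" where
  "nbhd X f = {x. \<forall>a\<in>X. x a = f a}"

definition basic_kappa_open :: "('k \<Rightarrow> 'v) set set" where
  "basic_kappa_open = {nbhd X f | X f. |X| <o |UNIV :: 'k set|}"

definition basic_I_open :: "'k set set \<Rightarrow> ('k \<Rightarrow> 'v) set set" where
  "basic_I_open I = {nbhd X f | X f. X \<in> I}"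

inductive_set kappa_borel_closure :: "('k \<Rightarrow> 'v) set set \<Rightarrow> ('k \<Rightarrow> 'v) set set"
  for B :: "('k \<Rightarrow> 'v) set set" where
  basic: "A \<in> B \<Longrightarrow> A \<in> kappa_borel_closure B"
| compl: "A \<in> kappa_borel_closure B \<Longrightarrow> - A \<in> kappa_borel_closure B"
| union: "F \<in> Pow (kappa_borel_closure B) \<Longrightarrow> |F| \<le>o |UNIV :: 'k set|
           \<Longrightarrow> \<Union>F \<in> kappa_borel_closure B"
  monos Pow_mono

definition kappa_Borel :: "('k \<Rightarrow> 'v) set set" where
  "kappa_Borel = kappa_borel_closure basic_kappa_open"

definition I_Borel :: "'k set set \<Rightarrow> ('k \<Rightarrow> 'v) set set" where
  "I_Borel I = kappa_borel_closure (basic_I_open I)"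

definition bounded_in :: "'k rel \<Rightarrow> 'k set \<Rightarrow> bool" where
  "bounded_in r A \<longleftrightarrow> (\<exists>\<beta>. \<forall>\<alpha>\<in>A. (\<alpha>, \<beta>) \<in> r)"

definition kappa_complete_proper_ideal :: "'k rel \<Rightarrow> 'k set set \<Rightarrow> bool" where
  "kappa_complete_proper_ideal r I \<longleftrightarrow>
     (\<forall>A\<in>I. \<forall>B. B \<subseteq> A \<longrightarrow> B \<in> I) \<and>
     (\<forall>F. F \<subseteq> I \<and> |F| <o r \<longrightarrow> \<Union>F \<in> I) \<and>
     UNIV \<notin> I"

end

theory Submission
  imports Defs
begin

text \<open>Every N_f is the intersection of the at most kappa sets N_{f|{a}}, each of which is
  basic kappa-open, so basic I-open sets are kappa-Borel whatever I is.  Conversely, by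
  regularity a set of size less than kappa is bounded, hence lies in I, so every basic
  kappa-open set is basic I-open.  Neither direction uses the value space nu.\<close>

lemma kappa_borel_closure_subset:
  assumes "B \<subseteq> kappa_borel_closure C"
  shows "kappa_borel_closure B \<subseteq> kappa_borel_closure C"
proof
  fix A assume "A \<in> kappa_borel_closure B"
  then show "A \<in> kappa_borel_closure C"
  proof (induction rule: kappa_borel_closure.induct)
    case (basic A)
    then show ?case using assms by blast
  next
    case (compl A)
    from compl.IH show ?case by (rule kappa_borel_closure.compl)
  next
    case (union F)
    then show ?case by (blast intro: kappa_borel_closure.union)
  qed
qed

lemma kappa_borel_closure_Inter:
  assumes "F \<subseteq> kappa_borel_closure B" and "|F| \<le>o |UNIV :: 'k set|"
  shows "\<Inter>F \<in> kappa_borel_closure (B :: ('k \<Rightarrow> 'v) set set)"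
proof -
  have "uminus ` F \<in> Pow (kappa_borel_closure B)"
    using assms(1) by (blast intro: kappa_borel_closure.compl)
  moreover have "|uminus ` F| \<le>o |UNIV :: 'k set|"
    using card_of_image assms(2) by (rule ordLeq_transitive)
  ultimately have "\<Union>(uminus ` F) \<in> kappa_borel_closure B"
    by (rule kappa_borel_closure.union)
  then have "- \<Union>(uminus ` F) \<in> kappa_borel_closure B"
    by (rule kappa_borel_closure.compl)
  then show ?thesis by (simp add: uminus_Sup image_image)
qed

lemma nbhd_eq_INT_singleton: "nbhd X f = (\<Inter>a\<in>X. nbhd {a} f)"
  unfolding nbhd_def by auto

lemma nbhd_singleton_in_basic_kappa_open:
  assumes "infinite (UNIV :: 'k set)"
  shows "nbhd {a :: 'k} f \<in> basic_kappa_open"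
proof -
  have "|{a}| <o |UNIV :: 'k set|"
    by (rule finite_ordLess_infinite[OF card_of_Well_order card_of_Well_order,
          unfolded Field_card_of]) (simp_all add: assms)
  then show ?thesis unfolding basic_kappa_open_def by blast
qed

lemma nbhd_in_kappa_Borel:
  assumes "infinite (UNIV :: 'k set)"
  shows "nbhd (X :: 'k set) f \<in> kappa_Borel"
proof -
  have "(\<lambda>a. nbhd {a} f) ` X \<subseteq> kappa_Borel"
    using nbhd_singleton_in_basic_kappa_open[OF assms]
    unfolding kappa_Borel_def by (blast intro: kappa_borel_closure.basic)
  moreover have "|(\<lambda>a. nbhd {a} f) ` X| \<le>o |UNIV :: 'k set|"
    using card_of_image card_of_mono1[OF subset_UNIV] by (rule ordLeq_transitive)
  ultimately show ?thesis
    unfolding nbhd_eq_INT_singleton[of X] kappa_Borel_def by (rule kappa_borel_closure_Inter)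
qed

lemma I_Borel_subset_kappa_Borel:
  assumes "infinite (UNIV :: 'k set)"
  shows "(I_Borel I :: ('k \<Rightarrow> 'v) set set) \<subseteq> kappa_Borel"
  unfolding I_Borel_def
proof (rule kappa_borel_closure_subset[of _ basic_kappa_open, folded kappa_Borel_def])
  show "basic_I_open I \<subseteq> (kappa_Borel :: ('k \<Rightarrow> 'v) set set)"
    using nbhd_in_kappa_Borel[OF assms] unfolding basic_I_open_def by blast
qed

lemma regularCard_small_bounded:
  fixes r :: "'k rel"
  assumes card: "Card_order r" and field: "Field r = UNIV" and regular: "regularCard r"
    and small: "|X| <o |UNIV :: 'k set|"
  shows "bounded_in r X"
proof (rule ccontr)
  assume unbounded: "\<not> bounded_in r X"
  have "Well_order r" using card by (rule card_order_on_well_order_on)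
  then have refl: "(a, a) \<in> r" and total: "a \<noteq> b \<Longrightarrow> (a, b) \<in> r \<or> (b, a) \<in> r" for a b
    using field
    unfolding well_order_on_def linear_order_on_def partial_order_on_def preorder_on_def
      refl_on_def total_on_def by auto
  have "cofinal X r"
    unfolding cofinal_def
  proof
    fix a
    from unbounded obtain b where "b \<in> X" "(b, a) \<notin> r" unfolding bounded_in_def by blast
    then show "\<exists>b\<in>X. a \<noteq> b \<and> (a, b) \<in> r" using refl total by metis
  qed
  then have "|X| =o r" using regular field unfolding regularCard_def by blast
  also have "r =o |UNIV :: 'k set|"
    using card_of_Field_ordIso[OF card] field by (simp add: ordIso_symmetric)
  finally show False using small not_ordLess_ordIso by blast
qed

lemma kappa_Borel_subset_I_Borel:
  fixes r :: "'k rel"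
  assumes "Card_order r" and "Field r = UNIV" and "regularCard r"
    and bounded_in_I: "\<And>A. bounded_in r A \<Longrightarrow> A \<in> I"
  shows "(kappa_Borel :: ('k \<Rightarrow> 'v) set set) \<subseteq> I_Borel I"
  unfolding kappa_Borel_def I_Borel_def
proof (rule kappa_borel_closure_subset)
  have "basic_kappa_open \<subseteq> (basic_I_open I :: ('k \<Rightarrow> 'v) set set)"
    using regularCard_small_bounded[OF assms(1-3)] bounded_in_I
    unfolding basic_kappa_open_def basic_I_open_def by blast
  then show "basic_kappa_open \<subseteq> kappa_borel_closure (basic_I_open I :: ('k \<Rightarrow> 'v) set set)"
    by (blast intro: kappa_borel_closure.basic)
qed

lemma I_Borel_eq_kappa_Borel:
  fixes r :: "'k rel"
  assumes "Card_order r" and "Field r = UNIV" and "infinite (UNIV :: 'k set)"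
    and "regularCard r" and "\<And>A. bounded_in r A \<Longrightarrow> A \<in> I"
  shows "(I_Borel I :: ('k \<Rightarrow> 'v) set set) = kappa_Borel"
  using I_Borel_subset_kappa_Borel[OF assms(3)] kappa_Borel_subset_I_Borel[OF assms(1,2,4,5)]
  by (rule subset_antisym)

theorem fact4p14:
  fixes r :: "'k rel" and I :: "'k set set"
  assumes card: "Card_order r" and field: "Field r = UNIV"
    and uncountable: "\<not> countable (UNIV :: 'k set)"
    and regular: "regularCard r"
    and ideal: "kappa_complete_proper_ideal r I"
    and bdd: "\<And>A. bounded_in r A \<Longrightarrow> A \<in> I"
  shows "((I_Borel I :: ('k \<Rightarrow> bool) set set) = kappa_Borel)
       \<and> ((I_Borel I :: ('k \<Rightarrow> 'k) set set) = kappa_Borel)"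
proof -
  have infinite: "infinite (UNIV :: 'k set)" using uncountable countable_finite by blast
  show ?thesis
    using I_Borel_eq_kappa_Borel[OF card field infinite regular bdd, where 'v = bool]
      I_Borel_eq_kappa_Borel[OF card field infinite regular bdd, where 'v = 'k]
    by (rule conjI)
qed

end
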